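(* Let $R$ be a finite group, let $T$ be a subgroup of $R$, let $p$ be a prime number, and let $\mathrm{Syl}_p(R,T)$ denote the set of Sylow $p$-subgroups $P$ of $R$ such that $T\cap P$ is a Sylow $p$-subgroup of $T$. Then the number of orbits of $T$ acting by conjugation on $\mathrm{Syl}_p(R,T)$ is at most $[R:T]/p^c$, where $p^c$ is the largest power of $p$ dividing $[R:T]$. *)

theory Defs
  imports "HOL-Algebra.Algebra" "HOL-Computational_Algebra.Primes"
begin

definition sylow_subgroup :: "('a, 'b) monoid_scheme \<Rightarrow> nat \<Rightarrow> 'a set \<Rightarrow> bool" where
  "sylow_subgroup G p P \<longleftrightarrow>
     subgroup P G \<and> card P = p ^ multiplicity p (order G)"

definition Syl_rel :: "('a, 'b) monoid_scheme \<Rightarrow> 'a set \<Rightarrow> nat \<Rightarrow> 'a set set" where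
  "Syl_rel R T p = {P. sylow_subgroup R p P \<and>
       sylow_subgroup (R\<lparr>carrier := T\<rparr>) p (T \<inter> P)}"

definition conj_set :: "('a, 'b) monoid_scheme \<Rightarrow> 'a \<Rightarrow> 'a set \<Rightarrow> 'a set" where
  "conj_set G g P = (\<lambda>x. g \<otimes>\<^bsub>G\<^esub> x \<otimes>\<^bsub>G\<^esub> inv\<^bsub>G\<^esub> g) ` P"

definition conj_orbits :: "('a, 'b) monoid_scheme \<Rightarrow> 'a set \<Rightarrow> 'a set set \<Rightarrow> 'a set set set" where
  "conj_orbits G T S = (\<lambda>P. {conj_set G t P | t. t \<in> T}) ` S"

end

theory Submission
  imports Defs
begin

(* Fix P in Syl_p(R,T) and let P act on the right cosets of T. By Sylow's conjugacy theorem
   every Q in Syl_p(R,T) is g P g^-1 for some g, and the map sending the coset T g to the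
   T-conjugacy class of g P g^-1 is constant on P-orbits. So every T-class in Syl_p(R,T) has a
   whole P-orbit in its fibre, namely that of T g. The stabiliser of T g in P is conjugate to
   Q \<inter> T, which has order p^b with p^b the p-part of |T|; hence that orbit has
   |P| / p^b = p^c elements. The fibres are disjoint, so (number of T-classes) * p^c <= [R:T]. *)

lemma card_mult_le_card_of_fibres:
  assumes "finite A" and "\<And>y. y \<in> B \<Longrightarrow> k \<le> card {x \<in> A. f x = y}"
  shows "card B * k \<le> card A"
proof (cases "finite B")
  case True
  have "card B * k = (\<Sum>y\<in>B. k)" by simp
  also have "\<dots> \<le> (\<Sum>y\<in>B. card {x \<in> A. f x = y})" using assms(2) by (rule sum_mono)
  also have "\<dots> = card (\<Union>y\<in>B. {x \<in> A. f x = y})"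
    using True assms(1) by (intro card_UN_disjoint[symmetric]) auto
  also have "\<dots> \<le> card A" using assms(1) by (intro card_mono) auto
  finally show ?thesis .
qed simp

lemma (in group) group_actionI:
  assumes closed: "\<And>g x. g \<in> carrier G \<Longrightarrow> x \<in> E \<Longrightarrow> \<phi> g x \<in> E"
    and ext: "\<And>g. g \<in> carrier G \<Longrightarrow> \<phi> g \<in> extensional E"
    and one: "\<And>x. x \<in> E \<Longrightarrow> \<phi> \<one> x = x"
    and mult: "\<And>g h x. g \<in> carrier G \<Longrightarrow> h \<in> carrier G \<Longrightarrow> x \<in> E \<Longrightarrow> \<phi> (g \<otimes> h) x = \<phi> g (\<phi> h x)"
  shows "group_action G E \<phi>"
proof -
  have Bij: "\<phi> g \<in> Bij E" if g: "g \<in> carrier G" for g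
  proof -
    have "bij_betw (\<phi> g) E E"
      by (rule bij_betwI[where g = "\<phi> (inv g)"])
        (use g closed in \<open>auto simp flip: mult simp: one\<close>)
    then show ?thesis using ext[OF g] unfolding Bij_def by simp
  qed
  have "\<phi> (g \<otimes> h) = \<phi> g \<otimes>\<^bsub>BijGroup E\<^esub> \<phi> h" if "g \<in> carrier G" "h \<in> carrier G" for g h
    using that Bij by (auto simp: BijGroup_def compose_def mult intro!: extensionalityI[OF ext])
  then have "\<phi> \<in> hom G (BijGroup E)"
    using Bij by (intro homI) (auto simp: BijGroup_def)
  then show ?thesis
    unfolding group_action_def group_hom_def group_hom_axioms_def
    by (simp add: is_group group_BijGroup)
qed

lemma (in group_action) fixed_point_of_prime_power_order:
  assumes "finite E" and p: "Factorial_Ring.prime p" and "order G = p ^ n" and "\<not> p dvd card E"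
  shows "\<exists>x\<in>E. stabilizer G \<phi> x = carrier G"
proof (rule ccontr)
  assume no_fixed_point: "\<not> ?thesis"
  have "p dvd card B" if orbit: "B \<in> orbits G E \<phi>" for B
  proof -
    obtain x where x: "x \<in> E" and B: "B = orbit G \<phi> x"
      using orbit unfolding orbits_def by auto
    have orbit_stabilizer: "card B * card (stabilizer G \<phi> x) = p ^ n"
      using orbit_stabilizer_theorem[OF x] B assms(3) by simp
    then obtain i where i: "card B = p ^ i"
      using divides_primepow_nat[OF p] by (metis dvd_triv_left)
    have "finite (carrier G)"
      using assms(3) p unfolding order_def by (metis card_ge_0_finite prime_gt_0_nat zero_less_power)
    then have "card (stabilizer G \<phi> x) < order G"
      using no_fixed_point x stabilizer_subset unfolding order_def by (meson psubsetI psubset_card_mono)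
    then have "i \<noteq> 0"
      using orbit_stabilizer i assms(3) by (metis less_irrefl mult_1 power_0)
    then show ?thesis using i by (simp add: dvd_power)
  qed
  then have "p dvd (\<Sum>B\<in>orbits G E \<phi>. card B)" by (simp add: dvd_sum)
  also have "(\<Sum>B\<in>orbits G E \<phi>. card B) = card E"
    using disjoint_sum[OF assms(1), of "\<lambda>_. 1::nat"] by simp
  finally show False using assms(4) by simp
qed

lemma Syl_relD:
  assumes "Q \<in> Syl_rel G T p"
  shows "sylow_subgroup G p Q" and "card (T \<inter> Q) = p ^ multiplicity p (card T)"
  using assms by (auto simp: Syl_rel_def sylow_subgroup_def order_def)

text \<open>Right translation by \<open>inv h\<close>, so that this is a left action.\<close>
definition rcoset_action :: "('a, 'b) monoid_scheme \<Rightarrow> 'a set \<Rightarrow> 'a \<Rightarrow> 'a set \<Rightarrow> 'a set"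
  where "rcoset_action G K h = (\<lambda>C \<in> rcosets\<^bsub>G\<^esub> K. C #>\<^bsub>G\<^esub> inv\<^bsub>G\<^esub> h)"

context group
begin

lemma rcos_in_rcosets:
  assumes "subgroup K G" and "C \<in> rcosets K" and "x \<in> carrier G"
  shows "C #> x \<in> rcosets K"
proof -
  obtain a where a: "a \<in> carrier G" and C: "C = K #> a"
    using assms(2) unfolding RCOSETS_def by auto
  have "C #> x = K #> (a \<otimes> x)"
    using a assms(1,3) C coset_mult_assoc subgroup.subset by blast
  then show ?thesis using a assms(3) by (simp add: rcosetsI subgroup.subset[OF assms(1)])
qed

lemma group_action_rcoset_action:
  assumes "subgroup K G"
  shows "group_action G (rcosets K) (rcoset_action G K)"
proof (rule group_actionI)
  have sub: "C \<subseteq> carrier G" if "C \<in> rcosets K" for C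
    using that subgroup.rcosets_carrier[OF assms is_group] by blast
  show "rcoset_action G K (g \<otimes> h) C = rcoset_action G K g (rcoset_action G K h C)"
    if "g \<in> carrier G" "h \<in> carrier G" "C \<in> rcosets K" for g h C
    using that sub[OF that(3)] rcos_in_rcosets[OF assms]
    by (simp add: rcoset_action_def coset_mult_assoc inv_mult_group)
qed (auto simp: rcoset_action_def rcos_in_rcosets[OF assms] subgroup.rcosets_carrier[OF assms is_group])

lemma rcos_eq_iff:
  assumes "subgroup K G" and "x \<in> carrier G" and "y \<in> carrier G"
  shows "K #> x = K #> y \<longleftrightarrow> x \<otimes> inv y \<in> K"
  using assms repr_independence repr_independenceD subgroup.rcos_module[OF assms(1) is_group]
  by metis

lemma stabilizer_rcoset_action:
  assumes H: "subgroup H G" and K: "subgroup K G" and g: "g \<in> carrier G"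
  shows "stabilizer (G\<lparr>carrier := H\<rparr>) (rcoset_action G K) (K #> g) = {h \<in> H. g \<otimes> h \<otimes> inv g \<in> K}"
proof -
  have "K #> g #> inv h = K #> g \<longleftrightarrow> g \<otimes> h \<otimes> inv g \<in> K" if h: "h \<in> carrier G" for h
  proof -
    have "K #> g #> inv h = K #> g \<longleftrightarrow> g \<otimes> inv h \<otimes> inv g \<in> K"
      using rcos_eq_iff[OF K, of "g \<otimes> inv h" g] g h coset_mult_assoc subgroup.subset[OF K] by simp
    also have "g \<otimes> inv h \<otimes> inv g = inv (g \<otimes> h \<otimes> inv g)"
      using g h by (simp add: inv_mult_group m_assoc)
    finally show ?thesis
      using g h subgroup.m_inv_closed[OF K] by (metis inv_inv m_closed inv_closed)
  qed
  then show ?thesis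
    using g subgroup.subset[OF H] subgroup.subset[OF K]
    by (auto simp: stabilizer_def rcoset_action_def rcosetsI)
qed

lemma finite_rcosets:
  assumes "finite (carrier G)" and "subgroup K G"
  shows "finite (rcosets K)"
  using assms rcosets_subset_PowG by (meson finite_Pow_iff finite_subset)

lemma multiplicity_order_eq_add:
  assumes "finite (carrier G)" and "subgroup H G" and "Factorial_Ring.prime p"
  shows "multiplicity p (order G) = multiplicity p (card (rcosets H)) + multiplicity p (card H)"
proof -
  have lagrange: "card (rcosets H) * card H = order G" and "order G \<noteq> 0"
    using lagrange[OF assms(2)] assms(1) order_gt_0_iff_finite by auto
  then have "card (rcosets H) \<noteq> 0" and "card H \<noteq> 0" by (metis mult_is_0)+
  then show ?thesis
    using prime_elem_multiplicity_mult_distrib[OF prime_imp_prime_elem[OF assms(3)]] lagrange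
    by metis
qed

lemma conj_set_mult:
  assumes "g \<in> carrier G" and "h \<in> carrier G" and "S \<subseteq> carrier G"
  shows "conj_set G g (conj_set G h S) = conj_set G (g \<otimes> h) S"
  using assms by (auto simp: conj_set_def image_image m_assoc inv_mult_group subsetD intro!: image_cong)

lemma conj_set_one: "S \<subseteq> carrier G \<Longrightarrow> conj_set G \<one> S = S"
  by (auto simp: conj_set_def subsetD)

lemma card_conj_set:
  assumes "g \<in> carrier G" and "S \<subseteq> carrier G"
  shows "card (conj_set G g S) = card S"
  unfolding conj_set_def using assms by (intro card_image inj_onI) (auto simp: subsetD)

lemma conj_set_subgroup_self:
  assumes H: "subgroup H G" and h: "h \<in> H"
  shows "conj_set G h H = H"
proof
  have closed: "conj_set G x H \<subseteq> H" if "x \<in> H" for x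
    using H that by (auto simp: conj_set_def subgroup.m_closed subgroup.m_inv_closed)
  show "conj_set G h H \<subseteq> H" using closed[OF h] .
  have hc: "h \<in> carrier G" and Hc: "H \<subseteq> carrier G"
    using H h subgroup.subset by auto
  have "H = conj_set G h (conj_set G (inv h) H)"
    using hc Hc by (simp add: conj_set_mult conj_set_one)
  also have "\<dots> \<subseteq> conj_set G h H"
    using closed[OF subgroup.m_inv_closed[OF H h]] by (auto simp: conj_set_def)
  finally show "H \<subseteq> conj_set G h H" .
qed

lemma card_orbit_rcoset_action:
  assumes H: "subgroup H G" and K: "subgroup K G" and g: "g \<in> carrier G"
  shows "card (orbit (G\<lparr>carrier := H\<rparr>) (rcoset_action G K) (K #> g)) * card (conj_set G g H \<inter> K)
           = card H"
proof -
  interpret H_act: group_action "G\<lparr>carrier := H\<rparr>" "rcosets K" "rcoset_action G K"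
    using group_action.induced_action[OF group_action_rcoset_action[OF K] H] .
  have "conj_set G g {h \<in> H. g \<otimes> h \<otimes> inv g \<in> K} = conj_set G g H \<inter> K"
    by (auto simp: conj_set_def)
  then have "card (stabilizer (G\<lparr>carrier := H\<rparr>) (rcoset_action G K) (K #> g))
              = card (conj_set G g H \<inter> K)"
    using stabilizer_rcoset_action[OF H K g] card_conj_set[OF g] subgroup.subset[OF H]
    by (metis (no_types, lifting) mem_Collect_eq subset_iff)
  then show ?thesis
    using H_act.orbit_stabilizer_theorem[OF rcosetsI[OF subgroup.subset[OF K] g]]
    by (simp add: order_def)
qed

lemma sylow_subgroups_conjugate:
  assumes fin: "finite (carrier G)" and p: "Factorial_Ring.prime p"
    and P: "sylow_subgroup G p P" and Q: "sylow_subgroup G p Q"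
  shows "\<exists>x\<in>carrier G. Q = conj_set G x P"
proof -
  define a where "a = multiplicity p (order G)"
  have PS: "subgroup P G" "card P = p ^ a" and QS: "subgroup Q G" "card Q = p ^ a"
    using P Q by (auto simp: sylow_subgroup_def a_def)
  interpret Q_act: group_action "G\<lparr>carrier := Q\<rparr>" "rcosets P" "rcoset_action G P"
    using group_action.induced_action[OF group_action_rcoset_action[OF PS(1)] QS(1)] .
  have "card (rcosets P) \<noteq> 0"
    using lagrange[OF PS(1)] fin order_gt_0_iff_finite by (metis mult_is_0 not_gr0)
  moreover have "multiplicity p (card (rcosets P)) = 0"
    using multiplicity_order_eq_add[OF fin PS(1) p] PS(2) p a_def
    by (simp add: multiplicity_same_power prime_gt_0_nat)
  ultimately have "\<not> p dvd card (rcosets P)"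
    using p by (simp add: prime_elem_multiplicity_eq_zero_iff)
  then obtain C where C: "C \<in> rcosets P"
    and fixed: "stabilizer (G\<lparr>carrier := Q\<rparr>) (rcoset_action G P) C = Q"
    using Q_act.fixed_point_of_prime_power_order[OF finite_rcosets[OF fin PS(1)] p] QS(2)
    by (auto simp: order_def)
  obtain x where x: "x \<in> carrier G" and "C = P #> x"
    using C unfolding RCOSETS_def by auto
  then have "conj_set G x Q \<subseteq> P"
    using fixed stabilizer_rcoset_action[OF QS(1) PS(1) x] by (auto simp: conj_set_def)
  moreover have "card (conj_set G x Q) = card P"
    using card_conj_set[OF x] subgroup.subset[OF QS(1)] PS(2) QS(2) by simp
  ultimately have "P = conj_set G x Q"
    using fin subgroup.subset[OF PS(1)] by (metis card_subset_eq finite_subset)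
  then have "conj_set G (inv x) P = Q"
    using x subgroup.subset[OF QS(1)] by (simp add: conj_set_mult conj_set_one)
  then show ?thesis using x by blast
qed

lemma image_conj_set_rcos:
  assumes "T \<subseteq> carrier G" and "P \<subseteq> carrier G" and "g \<in> carrier G"
  shows "(\<lambda>x. conj_set G x P) ` (T #> g) = (\<lambda>t. conj_set G t (conj_set G g P)) ` T"
proof -
  have "T #> g = (\<lambda>t. t \<otimes> g) ` T" by (auto simp: r_coset_def)
  then show ?thesis
    using assms by (auto simp: image_image conj_set_mult subsetD intro!: image_cong)
qed

lemma orbit_rcoset_action_subset_fibre:
  assumes T: "subgroup T G" and P: "subgroup P G" and g: "g \<in> carrier G"
  shows "orbit (G\<lparr>carrier := P\<rparr>) (rcoset_action G T) (T #> g)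
           \<subseteq> {C \<in> rcosets T. (\<lambda>x. conj_set G x P) ` C = (\<lambda>t. conj_set G t (conj_set G g P)) ` T}"
proof
  fix C assume "C \<in> orbit (G\<lparr>carrier := P\<rparr>) (rcoset_action G T) (T #> g)"
  then obtain y where y: "y \<in> P" and C: "C = T #> (g \<otimes> inv y)"
    using g subgroup.subset[OF T] subgroup.subset[OF P]
    by (auto simp: orbit_def rcoset_action_def rcosetsI coset_mult_assoc)
  have yc: "inv y \<in> P" "y \<in> carrier G"
    using subgroup.m_inv_closed[OF P y] subgroup.mem_carrier[OF P y] by auto
  have "conj_set G (g \<otimes> inv y) P = conj_set G g P"
    using conj_set_mult[of g "inv y" P] conj_set_subgroup_self[OF P yc(1)] g yc(2)
      subgroup.subset[OF P]
    by simp
  then show "C \<in> {C \<in> rcosets T. (\<lambda>x. conj_set G x P) ` C = (\<lambda>t. conj_set G t (conj_set G g P)) ` T}"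
    using image_conj_set_rcos[of T P "g \<otimes> inv y"] C g yc(2) subgroup.subset[OF T] subgroup.subset[OF P]
    by (simp add: rcosetsI)
qed

lemma card_conj_orbits_Syl_rel_mult_le:
  assumes fin: "finite (carrier G)" and T: "subgroup T G" and p: "Factorial_Ring.prime p"
  shows "card (conj_orbits G T (Syl_rel G T p)) * p ^ multiplicity p (card (rcosets T))
           \<le> card (rcosets T)"
proof (cases "Syl_rel G T p = {}")
  case True
  then show ?thesis by (simp add: conj_orbits_def)
next
  case False
  then obtain P where "P \<in> Syl_rel G T p" by blast
  then have P: "subgroup P G" "card P = p ^ multiplicity p (order G)"
    using Syl_relD(1) by (auto simp: sylow_subgroup_def)
  define c where "c = multiplicity p (card (rcosets T))"
  have "p ^ c \<le> card {C \<in> rcosets T. (\<lambda>x. conj_set G x P) ` C = B}"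
    if B_orbit: "B \<in> conj_orbits G T (Syl_rel G T p)" for B
  proof -
    obtain Q where Q: "Q \<in> Syl_rel G T p" and B: "B = (\<lambda>t. conj_set G t Q) ` T"
      using B_orbit by (auto simp: conj_orbits_def Setcompr_eq_image)
    obtain g where g: "g \<in> carrier G" and Qg: "Q = conj_set G g P"
      using sylow_subgroups_conjugate[OF fin p] Syl_relD(1) \<open>P \<in> Syl_rel G T p\<close> Q by blast
    let ?orbit = "orbit (G\<lparr>carrier := P\<rparr>) (rcoset_action G T) (T #> g)"
    have "card ?orbit * card (Q \<inter> T) = card P"
      using card_orbit_rcoset_action[OF P(1) T g] Qg by simp
    then have "card ?orbit * p ^ multiplicity p (card T) = p ^ c * p ^ multiplicity p (card T)"
      using Syl_relD(2)[OF Q] P(2) multiplicity_order_eq_add[OF fin T p]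
      by (simp add: Int_commute c_def power_add)
    then have "card ?orbit = p ^ c"
      using p prime_gt_0_nat by simp
    moreover have "?orbit \<subseteq> {C \<in> rcosets T. (\<lambda>x. conj_set G x P) ` C = B}"
      using orbit_rcoset_action_subset_fibre[OF T P(1) g] B Qg by simp
    ultimately show ?thesis
      using finite_rcosets[OF fin T]
      by (metis (no_types, lifting) card_mono finite_subset mem_Collect_eq subsetI)
  qed
  then show ?thesis
    unfolding c_def by (rule card_mult_le_card_of_fibres[OF finite_rcosets[OF fin T]])
qed

end

theorem lemma3p1:
  fixes R :: "('a, 'b) monoid_scheme" and T :: "'a set" and p :: nat
  assumes "group R" and "finite (carrier R)" and "subgroup T R" and "Factorial_Ring.prime p"
  shows "card (conj_orbits R T (Syl_rel R T p))
           \<le> card (rcosets\<^bsub>R\<^esub> T) div p ^ multiplicity p (card (rcosets\<^bsub>R\<^esub> T))"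
  using group.card_conj_orbits_Syl_rel_mult_le[OF assms] assms(4)
  by (simp add: less_eq_div_iff_mult_less_eq prime_gt_0_nat)

end
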